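(* Let $x\in(0,\pi/2)$ and $p,q\in\mathbb{R}$. (i) If $q\ge 1$ and $p\le 3q-\frac85$, then \[ \left(\tfrac{2}{\pi}\right)^{p}+\left(1-\left(\tfrac{2}{\pi}\right)^{p}\right)\cos^{q}x<\left(\tfrac{\sin x}{x}\right)^{p}<1-\tfrac{p}{3q}+\tfrac{p}{3q}\cos^{q}x \quad\text{if } p>0, \] \[ \left(\tfrac{2}{\pi}\right)^{1-\cos^{q}x}<\tfrac{\sin x}{x}<\exp\tfrac{\cos^{q}x-1}{3q}\quad\text{if } p=0, \] \[ 1-\tfrac{p}{3q}+\tfrac{p}{3q}\cos^{q}x<\left(\tfrac{\sin x}{x}\right)^{p}<\left(\tfrac{2}{\pi}\right)^{p}+\left(1-\left(\tfrac{2}{\pi}\right)^{p}\right)\cos^{q}x\quad\text{if } p<0, \] and the constants $\frac13$ and $\kappa_{p,q}$ are best possible, where $\kappa_{p,q}=\frac{q}{p}\left(1-\left(\frac{2}{\pi}\right)^p\right)$ for $p\neq 0$ and $\kappa_{0,q}=q\ln\frac{\pi}{2}$. (Equivalently, these inequalities say $\frac13 U_q(\cos x)<U_p(\frac{\sin x}{x})<\kappa_{p,q}U_q(\cos x)$, and $\frac13$ cannot be replaced by a larger constant nor $\kappa_{p,q}$ by a smaller one.) (ii) If $\frac{34}{35}<q\le 1$ and $p\ge \frac{\pi^2}{4}-1$, then the double inequality stated in (i) for $p>0$ holds with both inequality signs reversed. (iii) If $0<q\le \frac{34}{35}$ and $p\ge 3q-\frac85$, then all three double inequalities stated in (i) (for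 $p>0$, $p=0$, $p<0$) hold with all inequality signs reversed. (iv) If $q\le 0$ and $p\ge 3q-\frac85$, then \[ \left(\tfrac{\sin x}{x}\right)^{p}>1-\tfrac{p}{3q}+\tfrac{p}{3q}\cos^{q}x \text{ if } p>0,\quad \tfrac{\sin x}{x}>\exp\tfrac{\cos^{q}x-1}{3q}\text{ if } p=0,\quad \left(\tfrac{\sin x}{x}\right)^{p}<1-\tfrac{p}{3q}+\tfrac{p}{3q}\cos^{q}x\text{ if } p<0, \] where $\frac13$ is the best constant.
   Context: For $t\in(0,1)$ and $p\in\mathbb{R}$ let $U_p(t)=\frac{1-t^p}{p}$ if $p\ne0$ and $U_0(t)=-\ln t$. When $q=0$, expressions of the form $\frac{1-u^q}{q}$ are interpreted as their limit $-\ln u$; thus $1-\frac{p}{3q}+\frac{p}{3q}\cos^q x$ means $1+\frac p3\ln\cos x$ and $\exp\frac{\cos^q x-1}{3q}$ means $(\cos x)^{1/3}$ when $q=0$. "Best constant" refers to the constant $c$ in bounds of the form $1-\frac{p}{q}c+\frac{p}{q}c\cos^q x$ (resp. $\exp(c\frac{\cos^q x-1}{q})$ for $p=0$), i.e. to $c$ in $U_p(\frac{\sin x}{x})\lessgtr c\,U_q(\cos x)$. *)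

theory Defs
  imports Complex_Main
begin

definition U :: "real \<Rightarrow> real \<Rightarrow> real" where
  "U p t = (if p = 0 then - ln t else (1 - t powr p) / p)"

definition kappa :: "real \<Rightarrow> real \<Rightarrow> real" where
  "kappa p q = (if p = 0 then q * ln (pi / 2) else q / p * (1 - (2 / pi) powr p))"

end

theory Submission
  imports Defs "HOL-Analysis.Analysis" "HOL-Real_Asymp.Real_Asymp"
begin

(* Put f x = U p (sin x / x) and g x = U q (cos x); both tend to 0 at 0 and g' > 0 on (0, pi/2).
   The quotient f'/g' is deriv_quot p q, whose logarithmic derivative ln_deriv_quot' p q is affine
   in (p, q).  Using cot x < 1/x and 3 (1/x - cot x) < tan x, its sign on the whole parameter
   range in (i)-(iv) reduces to three extreme parameter values, where it amounts to inequalities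
   between polynomials in x, sin and cos of x, 2x or 3x.  These are proved by replacing sin and
   cos by Taylor polynomials with remainder bounds and checking the resulting polynomial
   inequalities by interval evaluation on a grid.  Once f'/g' is strictly monotone, so is f/g
   (monotone form of l'Hospital's rule), and f/g tends to 1/3 at 0 and to kappa p q at pi/2
   (when q > 0); hence these limits are the optimal constants. *)

section \<open>Polynomial lower bounds for trigonometric expressions\<close>

fun horner :: "int list \<Rightarrow> real \<Rightarrow> real" where
  "horner [] y = 0"
| "horner (c # cs) y = of_int c + y * horner cs y"

fun coeffs_add :: "int list \<Rightarrow> int list \<Rightarrow> int list" where
  "coeffs_add [] q = q"
| "coeffs_add p [] = p"
| "coeffs_add (a # p) (b # q) = (a + b) # coeffs_add p q"

fun coeffs_mult :: "int list \<Rightarrow> int list \<Rightarrow> int list" where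
  "coeffs_mult [] q = []"
| "coeffs_mult (a # p) q = coeffs_add (map ((*) a) q) (0 # coeffs_mult p q)"

lemma horner_coeffs_add [simp]: "horner (coeffs_add p q) y = horner p y + horner q y"
  by (induction p q rule: coeffs_add.induct) (auto simp: algebra_simps)

lemma horner_map_times [simp]: "horner (map ((*) c) p) y = of_int c * horner p y"
  by (induction p) (auto simp: algebra_simps)

lemma horner_coeffs_mult [simp]: "horner (coeffs_mult p q) y = horner p y * horner q y"
  by (induction p) (auto simp: algebra_simps)

lemma horner_append: "horner (p @ q) y = horner p y + y ^ length p * horner q y"
  by (induction p) (auto simp: algebra_simps)

lemma horner_upt: "horner (map f [0..<N]) y = (\<Sum>i<N. of_int (f i) * y ^ i)"
  by (induction N) (auto simp: horner_append algebra_simps)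

lemma horner_dropWhile_zero:
  "horner P y = y ^ length (takeWhile ((=) 0) P) * horner (dropWhile ((=) 0) P) y"
  by (induction P) auto

lemma abs_horner_le: "0 \<le> y \<Longrightarrow> \<bar>horner p y\<bar> \<le> horner (map abs p) y"
proof (induction p)
  case (Cons c p)
  have "\<bar>horner (c # p) y\<bar> \<le> \<bar>of_int c\<bar> + y * \<bar>horner p y\<bar>"
    using Cons.prems by (simp add: abs_mult abs_triangle_ineq order_trans[OF abs_triangle_ineq])
  also have "\<dots> \<le> \<bar>of_int c\<bar> + y * horner (map abs p) y"
    using Cons by (simp add: mult_left_mono)
  finally show ?case by simp
qed simp

datatype trig_fun = Cos | Sin

fun trig_app :: "trig_fun \<Rightarrow> real \<Rightarrow> real" where
  "trig_app Cos = cos"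
| "trig_app Sin = sin"

fun taylor_sign :: "trig_fun \<Rightarrow> nat \<Rightarrow> int" where
  "taylor_sign Cos i = (if even i then (-1) ^ (i div 2) else 0)"
| "taylor_sign Sin i = (if odd i then (-1) ^ (i div 2) else 0)"

lemma taylor_sign_div_fact:
  "of_int (taylor_sign Cos i) / fact i = cos_coeff i"
  "of_int (taylor_sign Sin i) / fact i = sin_coeff i"
  by (auto simp: cos_coeff_def sin_coeff_def elim!: oddE)

lemma trig_app_taylor_error:
  "\<bar>trig_app f x - (\<Sum>i<N. of_int (taylor_sign f i) / fact i * x ^ i)\<bar> \<le> \<bar>x\<bar> ^ N / fact N"
proof (cases f)
  case Cos
  obtain t where "cos x = (\<Sum>m<N. cos_coeff m * x ^ m) + cos (t + 1/2 * real N * pi) / fact N * x ^ N"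
    using Maclaurin_cos_expansion by blast
  moreover have "\<bar>cos (t + 1/2 * real N * pi) / fact N * x ^ N\<bar> \<le> \<bar>x\<bar> ^ N / fact N"
    by (simp add: abs_mult power_abs divide_right_mono mult_left_le_one_le)
  ultimately show ?thesis unfolding Cos taylor_sign_div_fact by simp
next
  case Sin
  show ?thesis
    using Maclaurin_sin_bound[of x N] unfolding Sin taylor_sign_div_fact by (simp add: divide_inverse mult.commute)
qed

(* fact N div fact i, computed so that code_simp evaluates it quickly *)
fun fact_quot :: "nat \<Rightarrow> nat \<Rightarrow> int" where
  "fact_quot N i = (if N \<le> i then 1 else int N * fact_quot (N - 1) i)"

declare fact_quot.simps [simp del]

lemma fact_quot_eq: "i \<le> N \<Longrightarrow> of_int (fact_quot N i) = (fact N / fact i :: real)"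
proof (induction N)
  case (Suc N)
  show ?case
  proof (cases "Suc N \<le> i")
    case True
    then have "i = Suc N" using Suc.prems by simp
    then show ?thesis by (simp add: fact_quot.simps)
  next
    case False
    then show ?thesis using Suc by (simp add: fact_quot.simps field_simps)
  qed
qed (simp add: fact_quot.simps)

definition taylor_coeffs :: "trig_fun \<Rightarrow> nat \<Rightarrow> int \<Rightarrow> int list" where
  "taylor_coeffs f N k = map (\<lambda>i. taylor_sign f i * fact_quot N i * k ^ i) [0..<N]"

lemma horner_taylor_coeffs:
  "horner (taylor_coeffs f N k) y = fact N * (\<Sum>i<N. of_int (taylor_sign f i) / fact i * (of_int k * y) ^ i)"
  unfolding taylor_coeffs_def horner_upt sum_distrib_left
proof (rule sum.cong[OF refl])
  fix i assume "i \<in> {..<N}"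
  then have "(of_int (fact_quot N i) :: real) = fact N / fact i"
    by (simp add: fact_quot_eq)
  then show "of_int (taylor_sign f i * fact_quot N i * k ^ i) * y ^ i =
      fact N * (of_int (taylor_sign f i) / fact i * (of_int k * y) ^ i)"
    by (simp add: power_mult_distrib)
qed

lemma taylor_coeffs_error:
  assumes "0 \<le> y" "0 \<le> k"
  shows "\<bar>fact N * trig_app f (of_int k * y) - horner (taylor_coeffs f N k) y\<bar> \<le> (of_int k * y) ^ N"
proof -
  have "\<bar>fact N * trig_app f (of_int k * y) - horner (taylor_coeffs f N k) y\<bar>
      = fact N * \<bar>trig_app f (of_int k * y)
          - (\<Sum>i<N. of_int (taylor_sign f i) / fact i * (of_int k * y) ^ i)\<bar>"
    by (simp add: horner_taylor_coeffs abs_mult flip: right_diff_distrib)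
  also have "\<dots> \<le> fact N * (\<bar>of_int k * y\<bar> ^ N / fact N)"
    by (intro mult_left_mono trig_app_taylor_error) auto
  also have "\<dots> = (of_int k * y) ^ N" using assms by simp
  finally show ?thesis .
qed

type_synonym trig_term = "int list \<times> trig_fun \<times> int"

fun trig_expr :: "int list \<Rightarrow> trig_term list \<Rightarrow> real \<Rightarrow> real" where
  "trig_expr a [] y = horner a y"
| "trig_expr a ((b, f, k) # ts) y = horner b y * trig_app f (of_int k * y) + trig_expr a ts y"

definition remainder_coeffs :: "nat \<Rightarrow> int \<Rightarrow> int list \<Rightarrow> int list" where
  "remainder_coeffs N k b = replicate N 0 @ map (\<lambda>c. - \<bar>c\<bar> * k ^ N) b"

lemma horner_remainder_coeffs:
  "horner (remainder_coeffs N k b) y = - ((of_int k * y) ^ N * horner (map abs b) y)"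
proof -
  have "horner (map (\<lambda>c. - \<bar>c\<bar> * k ^ N) b) y = - (of_int k ^ N * horner (map abs b) y)"
    by (induction b) (simp_all add: algebra_simps)
  moreover have "horner (replicate N 0) y = 0" by (induction N) simp_all
  ultimately show ?thesis by (simp add: remainder_coeffs_def horner_append power_mult_distrib)
qed

(* trig_lower N a ts is a polynomial lower bound for fact N times trig_expr a ts y (y, k \<ge> 0):
   each cos (k y) and sin (k y) is replaced by its Taylor polynomial of order N minus the
   Lagrange bound (k y)^N / fact N. *)
fun trig_lower :: "nat \<Rightarrow> int list \<Rightarrow> trig_term list \<Rightarrow> int list" where
  "trig_lower N a [] = map ((*) (fact_quot N 0)) a"
| "trig_lower N a ((b, f, k) # ts) =
     coeffs_add (coeffs_add (coeffs_mult b (taylor_coeffs f N k)) (remainder_coeffs N k b)) (trig_lower N a ts)"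

lemma trig_lower_le:
  assumes "0 \<le> y" "\<forall>(b, f, k) \<in> set ts. 0 \<le> k"
  shows "horner (trig_lower N a ts) y \<le> fact N * trig_expr a ts y"
  using assms(2)
proof (induction ts)
  case Nil
  then show ?case by (simp add: fact_quot_eq)
next
  case (Cons t ts)
  obtain b f k where t: "t = (b, f, k)" by (cases t) auto
  have k: "0 \<le> k" using Cons.prems t by auto
  define e where "e = fact N * trig_app f (of_int k * y) - horner (taylor_coeffs f N k) y"
  have "\<bar>horner b y * e\<bar> \<le> \<bar>horner b y\<bar> * (of_int k * y) ^ N"
    unfolding abs_mult e_def by (intro mult_left_mono taylor_coeffs_error assms(1) k) simp_all
  also have "\<dots> \<le> horner (map abs b) y * (of_int k * y) ^ N"
    using abs_horner_le[OF assms(1)] assms(1) k by (intro mult_right_mono) auto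
  finally have "horner b y * horner (taylor_coeffs f N k) y - (of_int k * y) ^ N * horner (map abs b) y
      \<le> fact N * (horner b y * trig_app f (of_int k * y))"
    unfolding e_def by (simp add: algebra_simps abs_le_iff)
  moreover have "horner (trig_lower N a ts) y \<le> fact N * trig_expr a ts y"
    using Cons t by simp
  ultimately show ?case
    using t by (simp add: horner_remainder_coeffs distrib_left)
qed

fun horner_lower :: "int \<Rightarrow> int \<Rightarrow> int \<Rightarrow> int list \<Rightarrow> int" where
  "horner_lower D l u [] = 0"
| "horner_lower D l u (c # cs) =
     (let r = horner_lower D l u cs in D ^ Suc (length cs) * c + (if 0 \<le> r then l else u) * r)"

lemma horner_lower_le:
  assumes D: "0 < D" and l: "0 \<le> l" and y: "of_int l / of_int D \<le> y" "y \<le> of_int u / of_int D"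
  shows "of_int (horner_lower D l u cs) \<le> of_int D ^ length cs * horner cs y"
proof (induction cs)
  case (Cons c cs)
  define r where "r = horner_lower D l u cs"
  have Dy: "of_int l \<le> of_int D * y" "of_int D * y \<le> of_int u" using y D by (simp_all add: field_simps)
  have y0: "0 \<le> y" using y(1) l D by (simp add: order_trans[OF _ y(1)])
  have IH: "of_int r \<le> of_int D ^ length cs * horner cs y" using Cons r_def by simp
  have "(if 0 \<le> r then of_int l else of_int u) * of_int r \<le> (of_int D * y) * of_int r"
    using Dy mult_right_mono[of "of_int l" "of_int D * y" "of_int r"]
      mult_right_mono_neg[of "of_int D * y" "of_int u" "of_int r"] by auto
  also have "\<dots> \<le> (of_int D * y) * (of_int D ^ length cs * horner cs y)"
    using IH D y0 by (intro mult_left_mono) auto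
  finally show ?case by (cases "0 \<le> r") (simp_all add: r_def[symmetric] Let_def algebra_simps)
qed simp

fun pos_on_grid :: "int \<Rightarrow> int \<Rightarrow> nat \<Rightarrow> int list \<Rightarrow> bool" where
  "pos_on_grid D l 0 Q = True"
| "pos_on_grid D l (Suc K) Q = (0 < horner_lower D l (l + 1) Q \<and> pos_on_grid D (l + 1) K Q)"

lemma horner_pos_on_grid:
  assumes "pos_on_grid D l K Q" "0 < K" "0 < D" "0 \<le> l"
    and "of_int l / of_int D \<le> y" "y \<le> of_int (l + int K) / of_int D"
  shows "0 < horner Q y"
  using assms
proof (induction K arbitrary: l)
  case (Suc K)
  show ?case
  proof (cases "y \<le> of_int (l + 1) / of_int D")
    case True
    then have "of_int (horner_lower D l (l + 1) Q) \<le> of_int D ^ length Q * horner Q y"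
      using horner_lower_le Suc.prems by blast
    moreover have "0 < horner_lower D l (l + 1) Q" using Suc.prems by simp
    ultimately have "0 < of_int D ^ length Q * horner Q y" by linarith
    then show ?thesis using Suc.prems(3) by (simp add: zero_less_mult_iff)
  next
    case False
    then have "0 < K" using Suc.prems(6) by (cases K) auto
    then show ?thesis using Suc.IH[of "l + 1"] Suc.prems False by (simp add: add_ac)
  qed
qed simp

definition trig_pos_cert :: "nat \<Rightarrow> int list \<Rightarrow> trig_term list \<Rightarrow> int \<Rightarrow> int \<Rightarrow> nat \<Rightarrow> bool" where
  "trig_pos_cert N a ts D l K \<longleftrightarrow> 0 < D \<and> 0 \<le> l \<and> 0 < K \<and> (\<forall>(b, f, k) \<in> set ts. 0 \<le> k) \<and>
     pos_on_grid D l K (dropWhile ((=) 0) (trig_lower N a ts))"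

lemma trig_expr_pos:
  assumes "trig_pos_cert N a ts D l K" "0 < y"
    and "of_int l / of_int D \<le> y" "y \<le> of_int (l + int K) / of_int D"
  shows "0 < trig_expr a ts y"
proof -
  have "0 < horner (dropWhile ((=) 0) (trig_lower N a ts)) y"
    using assms by (intro horner_pos_on_grid) (auto simp: trig_pos_cert_def)
  then have "0 < horner (trig_lower N a ts) y"
    using \<open>0 < y\<close> by (subst horner_dropWhile_zero) simp
  also have "\<dots> \<le> fact N * trig_expr a ts y"
    using assms by (intro trig_lower_le) (auto simp: trig_pos_cert_def)
  finally show ?thesis by (simp add: zero_less_mult_iff)
qed

section \<open>Monotone form of l'Hospital's rule\<close>

lemma GMVT_factored:
  fixes f g g' E :: "real \<Rightarrow> real"
  assumes "a < b"
    and df: "\<And>x. a \<le> x \<Longrightarrow> x \<le> b \<Longrightarrow> (f has_real_derivative E x * g' x) (at x)"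
    and dg: "\<And>x. a \<le> x \<Longrightarrow> x \<le> b \<Longrightarrow> (g has_real_derivative g' x) (at x)"
    and g': "\<And>x. a < x \<Longrightarrow> x < b \<Longrightarrow> g' x \<noteq> 0"
  shows "\<exists>c. a < c \<and> c < b \<and> f b - f a = E c * (g b - g a)"
proof -
  obtain c where c: "a < c" "c < b" "(f b - f a) * g' c = (g b - g a) * (E c * g' c)"
    using GMVT'[OF \<open>a < b\<close>, of f g g' "\<lambda>x. E x * g' x"] df dg by (auto intro: DERIV_isCont)
  then have "(f b - f a - E c * (g b - g a)) * g' c = 0" by (simp add: algebra_simps)
  then show ?thesis using c g' by auto
qed

lemma lhospital_strict_mono_on:
  fixes f g g' E :: "real \<Rightarrow> real"
  assumes f0: "(f \<longlongrightarrow> 0) (at_right 0)" and g0: "(g \<longlongrightarrow> 0) (at_right 0)"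
    and df: "\<And>x. 0 < x \<Longrightarrow> x < b \<Longrightarrow> (f has_real_derivative E x * g' x) (at x)"
    and dg: "\<And>x. 0 < x \<Longrightarrow> x < b \<Longrightarrow> (g has_real_derivative g' x) (at x)"
    and g'_pos: "\<And>x. 0 < x \<Longrightarrow> x < b \<Longrightarrow> 0 < g' x"
    and E: "strict_mono_on {0<..<b} E"
  shows "strict_mono_on {0<..<b} (\<lambda>x. f x / g x)"
proof -
  have cauchy: "\<exists>c. s < c \<and> c < t \<and> f t - f s = E c * (g t - g s)" if "0 < s" "s < t" "t < b" for s t
  proof (rule GMVT_factored[OF that(2)])
    fix x
    show "(f has_real_derivative E x * g' x) (at x)" "(g has_real_derivative g' x) (at x)"
      if "s \<le> x" "x \<le> t" using that \<open>0 < s\<close> \<open>t < b\<close> by (auto intro!: df dg)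
    show "g' x \<noteq> 0" if "s < x" "x < t" using that \<open>0 < s\<close> \<open>t < b\<close> g'_pos[of x] by simp
  qed
  have g_less: "g s < g t" if "0 < s" "s < t" "t < b" for s t
  proof (rule DERIV_pos_imp_increasing[OF that(2)])
    fix x assume "s \<le> x" "x \<le> t"
    then show "\<exists>d. (g has_real_derivative d) (at x) \<and> 0 < d"
      using that dg[of x] g'_pos[of x] by auto
  qed
  have below: "0 < g x \<and> f x \<le> E x * g x" if x: "0 < x" "x < b" for x
  proof
    have "0 \<le> g (x/2)"
      using eventually_at_right_real[of 0 "x/2"] x
      by (intro tendsto_upperbound[OF g0]) (auto elim!: eventually_mono intro!: g_less less_imp_le)
    then show "0 < g x" using g_less[of "x/2" x] x by simp
    have "E x * g s - f s \<le> E x * g x - f x" if s: "0 < s" "s < x" for s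
    proof -
      obtain c where c: "s < c" "c < x" "f x - f s = E c * (g x - g s)"
        using cauchy[of s x] s x by auto
      have "E c < E x" using c s x by (intro strict_mono_onD[OF E]) auto
      then have "E c * (g x - g s) \<le> E x * (g x - g s)"
        using g_less[of s x] s x by (intro mult_right_mono) auto
      then show ?thesis using c by (simp add: algebra_simps)
    qed
    then have "E x * 0 - 0 \<le> E x * g x - f x"
      using eventually_at_right_real[of 0 x] x
      by (intro tendsto_upperbound[OF tendsto_diff[OF tendsto_mult_left[OF g0] f0]])
        (auto elim!: eventually_mono)
    then show "f x \<le> E x * g x" by simp
  qed
  show ?thesis
  proof (rule strict_mono_onI)
    fix x y :: real assume "x \<in> {0<..<b}" "y \<in> {0<..<b}" "x < y"
    then have x: "0 < x" "x < y" "y < b" by auto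
    obtain c where c: "x < c" "c < y" "f y - f x = E c * (g y - g x)" using cauchy[OF x] by blast
    have gx: "0 < g x" "0 < g y" using below x by auto
    define R where "R = f x / g x"
    have "R \<le> E x" using below[of x] x gx by (simp add: R_def divide_le_eq)
    also have "E x < E c" using c x by (intro strict_mono_onD[OF E]) auto
    finally have "R * (g y - g x) < E c * (g y - g x)"
      using g_less[OF x] by (intro mult_strict_right_mono) auto
    moreover have "R * g y = R * (g y - g x) + f x" using gx by (simp add: R_def field_simps)
    ultimately have "R * g y < f y" using c by linarith
    then show "f x / g x < f y / g y" using gx by (simp add: R_def pos_less_divide_eq)
  qed
qed

lemma strict_mono_on_tendsto_bounds:
  fixes R :: "real \<Rightarrow> real"
  assumes mono: "strict_mono_on {a<..<b} R" and x: "a < x" "x < b"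
  shows strict_mono_on_gt_at_right: "(R \<longlongrightarrow> L) (at_right a) \<Longrightarrow> L < R x"
    and strict_mono_on_lt_at_left: "(R \<longlongrightarrow> M) (at_left b) \<Longrightarrow> R x < M"
proof -
  assume L: "(R \<longlongrightarrow> L) (at_right a)"
  obtain m where m: "a < m" "m < x" using dense x(1) by blast
  have "L \<le> R m"
    using eventually_at_right_real[OF m(1)] mono m x
    by (intro tendsto_upperbound[OF L]) (auto elim!: eventually_mono intro!: less_imp_le strict_mono_onD[OF mono])
  also have "R m < R x" using m x by (intro strict_mono_onD[OF mono]) auto
  finally show "L < R x" .
next
  assume M: "(R \<longlongrightarrow> M) (at_left b)"
  obtain m where m: "x < m" "m < b" using dense x(2) by blast
  have "R x < R m" using m x by (intro strict_mono_onD[OF mono]) auto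
  also have "R m \<le> M"
    using eventually_at_left_real[OF m(2)] mono m x
    by (intro tendsto_lowerbound[OF M]) (auto elim!: eventually_mono intro!: less_imp_le strict_mono_onD[OF mono])
  finally show "R x < M" .
qed

lemma eventually_at_right_real_witness:
  assumes "eventually P (at_right a)" "a < (b::real)"
  shows "\<exists>x\<in>{a<..<b}. P x"
proof -
  have "eventually (\<lambda>x. x \<in> {a<..<b} \<and> P x) (at_right a)"
    using eventually_at_right_real[OF assms(2)] assms(1) by (rule eventually_conj)
  from eventually_happens'[OF trivial_limit_at_right_real this] show ?thesis by blast
qed

lemma eventually_at_left_real_witness:
  assumes "eventually P (at_left b)" "a < (b::real)"
  shows "\<exists>x\<in>{a<..<b}. P x"
proof -
  have "eventually (\<lambda>x. x \<in> {a<..<b} \<and> P x) (at_left b)"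
    using eventually_at_left_real[OF assms(2)] assms(1) by (rule eventually_conj)
  from eventually_happens'[OF trivial_limit_at_left_real this] show ?thesis by blast
qed

section \<open>The quotient of the derivatives of U p (sin x / x) and U q (cos x)\<close>

lemma U_one [simp]: "U p 1 = 0"
  by (simp add: U_def)

lemma U_has_real_derivative:
  assumes "0 < t"
  shows "(U p has_real_derivative - (t powr (p - 1))) (at t)"
proof (cases "p = 0")
  case True
  have "((\<lambda>t. - ln t) has_real_derivative - (t powr (p - 1))) (at t)"
    using assms True by (auto intro!: derivative_eq_intros simp: powr_minus_divide)
  moreover have "U p = (\<lambda>t. - ln t)" using True by (simp add: U_def fun_eq_iff)
  ultimately show ?thesis by simp
next
  case False
  have "((\<lambda>t. (1 - t powr p) / p) has_real_derivative - (t powr (p - 1))) (at t)"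
    using assms False by (auto intro!: derivative_eq_intros simp: powr_diff field_simps)
  moreover have "U p = (\<lambda>t. (1 - t powr p) / p)" using False by (simp add: U_def fun_eq_iff)
  ultimately show ?thesis by simp
qed

lemma U_pos:
  assumes "0 < t" "t < 1"
  shows "0 < U p t"
proof -
  have "U p 1 < U p t"
  proof (rule DERIV_neg_imp_decreasing[OF assms(2)])
    fix s assume "t \<le> s" "s \<le> 1"
    then show "\<exists>d. (U p has_real_derivative d) (at s) \<and> d < 0"
      using assms U_has_real_derivative[of s p] by auto
  qed
  then show ?thesis by simp
qed

lemma U_tendsto: "0 < t \<Longrightarrow> (f \<longlongrightarrow> t) F \<Longrightarrow> ((\<lambda>x. U p (f x)) \<longlongrightarrow> U p t) F"
  using isCont_tendsto_compose[OF DERIV_isCont[OF U_has_real_derivative]] by blast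

lemma sin_cos_pos:
  assumes "0 < x" "x < pi/2"
  shows "0 < sin x \<and> 0 < cos x"
  using assms by (simp add: sin_gt_zero cos_gt_zero)

lemma x_cos_less_sin:
  assumes "0 < x" "x < pi"
  shows "x * cos x < sin x"
proof -
  have "sin 0 - 0 * cos 0 < sin x - x * cos x"
  proof (rule DERIV_pos_imp_increasing_open[OF assms(1)])
    fix t :: real assume t: "0 < t" "t < x"
    have "((\<lambda>t. sin t - t * cos t) has_real_derivative t * sin t) (at t)"
      by (auto intro!: derivative_eq_intros)
    moreover have "0 < t * sin t" using t assms by (simp add: sin_gt_zero)
    ultimately show "\<exists>d. ((\<lambda>t. sin t - t * cos t) has_real_derivative d) (at t) \<and> 0 < d" by blast
  qed (intro continuous_intros)
  then show ?thesis by simp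
qed

lemma has_real_derivative_U_sin_div:
  assumes "0 < x" "x < pi"
  shows "((\<lambda>x. U p (sin x / x)) has_real_derivative
      (sin x / x) powr (p - 1) * (sin x - x * cos x) / x^2) (at x)"
proof -
  have pos: "0 < sin x / x" using assms by (simp add: sin_gt_zero)
  have "((\<lambda>x. sin x / x) has_real_derivative (x * cos x - sin x) / x^2) (at x)"
    using assms by (auto intro!: derivative_eq_intros simp: field_simps power2_eq_square)
  from DERIV_chain2[OF U_has_real_derivative[OF pos] this]
  show ?thesis by (simp add: field_simps)
qed

lemma has_real_derivative_U_cos:
  assumes "0 < x" "x < pi/2"
  shows "((\<lambda>x. U q (cos x)) has_real_derivative cos x powr (q - 1) * sin x) (at x)"
proof -
  have pos: "0 < cos x" using assms by (simp add: cos_gt_zero)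
  from DERIV_chain2[OF U_has_real_derivative[OF pos] DERIV_cos[of x]]
  show ?thesis by simp
qed

definition deriv_quot :: "real \<Rightarrow> real \<Rightarrow> real \<Rightarrow> real" where
  "deriv_quot p q x = (sin x / x) powr (p - 1) * ((sin x - x * cos x) / (x^2 * sin x)) * cos x powr (1 - q)"

lemma deriv_quot_pos: "0 < x \<Longrightarrow> x < pi/2 \<Longrightarrow> 0 < deriv_quot p q x"
  unfolding deriv_quot_def using x_cos_less_sin[of x] sin_gt_zero[of x] cos_gt_zero[of x]
  by (intro mult_pos_pos divide_pos_pos) auto

lemma deriv_quot_mult_deriv_U_cos:
  assumes "0 < x" "x < pi/2"
  shows "deriv_quot p q x * (cos x powr (q - 1) * sin x) = (sin x / x) powr (p - 1) * (sin x - x * cos x) / x^2"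
proof -
  have one: "cos x powr (1 - q) * cos x powr (q - 1) = 1"
    using assms cos_gt_zero[of x] by (simp flip: powr_add)
  have "deriv_quot p q x * (cos x powr (q - 1) * sin x)
      = (sin x / x) powr (p - 1) * ((sin x - x * cos x) / (x^2 * sin x)) * sin x
        * (cos x powr (1 - q) * cos x powr (q - 1))"
    by (simp add: deriv_quot_def ac_simps)
  also have "\<dots> = (sin x / x) powr (p - 1) * (sin x - x * cos x) / x^2"
    unfolding one using assms sin_gt_zero[of x] by (simp add: field_simps)
  finally show ?thesis .
qed

lemma deriv_quot_tendsto_0: "(deriv_quot p q \<longlongrightarrow> 1/3) (at_right 0)"
proof -
  have "((\<lambda>x::real. sin x / x) \<longlongrightarrow> 1) (at_right 0)" by real_asymp
  moreover have "((\<lambda>x::real. (sin x - x * cos x) / (x^2 * sin x)) \<longlongrightarrow> 1/3) (at_right 0)"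
    by real_asymp
  moreover have "((\<lambda>x::real. cos x) \<longlongrightarrow> 1) (at_right 0)" by real_asymp
  ultimately have "(deriv_quot p q \<longlongrightarrow> 1 powr (p - 1) * (1/3) * 1 powr (1 - q)) (at_right 0)"
    unfolding deriv_quot_def[abs_def] by (intro tendsto_mult tendsto_powr tendsto_const) auto
  then show ?thesis by simp
qed

definition ln_deriv_quot' :: "real \<Rightarrow> real \<Rightarrow> real \<Rightarrow> real" where
  "ln_deriv_quot' p q x =
     (p - 1) * (cot x - 1 / x) + x * sin x / (sin x - x * cos x) - 2 / x - cot x + (q - 1) * tan x"

lemma has_real_derivative_deriv_quot:
  assumes "0 < x" "x < pi/2"
  shows "(deriv_quot p q has_real_derivative deriv_quot p q x * ln_deriv_quot' p q x) (at x)"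
proof -
  define L where "L z = (p - 1) * (ln (sin z) - ln z) + ln (sin z - z * cos z) - 2 * ln z - ln (sin z)
      + (1 - q) * ln (cos z)" for z
  have pos: "0 < sin z" "0 < cos z" "0 < sin z - z * cos z" if "0 < z" "z < pi/2" for z
    using that x_cos_less_sin[of z] by (simp_all add: sin_gt_zero cos_gt_zero)
  note pos_x = pos[OF assms]
  have "(L has_real_derivative (p - 1) * (cos x / sin x - 1 / x)
      + (cos x - (cos x - x * sin x)) / (sin x - x * cos x) - 2 / x - cos x / sin x
      + (1 - q) * (- sin x / cos x)) (at x)"
    unfolding L_def[abs_def] using assms(1) pos_x by (auto intro!: derivative_eq_intros simp: ac_simps)
  also have "(p - 1) * (cos x / sin x - 1 / x) + (cos x - (cos x - x * sin x)) / (sin x - x * cos x)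
      - 2 / x - cos x / sin x + (1 - q) * (- sin x / cos x) = ln_deriv_quot' p q x"
    by (simp add: ln_deriv_quot'_def tan_def cot_def algebra_simps add_divide_distrib[symmetric])
  finally have L': "(L has_real_derivative ln_deriv_quot' p q x) (at x)" .
  have eq: "exp (L z) = deriv_quot p q z" if z: "0 < z" "z < pi/2" for z
  proof -
    have "L z = (p - 1) * ln (sin z / z) + ln ((sin z - z * cos z) / (z^2 * sin z)) + (1 - q) * ln (cos z)"
      using z pos[OF z] by (simp add: L_def ln_div ln_mult ln_realpow)
    then show ?thesis
      using z pos[OF z] by (simp add: deriv_quot_def exp_add powr_def)
  qed
  have "((\<lambda>z. exp (L z)) has_real_derivative deriv_quot p q x * ln_deriv_quot' p q x) (at x)"
    using DERIV_chain2[OF DERIV_exp L'] unfolding eq[OF assms] .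
  then show ?thesis
    by (rule has_field_derivative_transform_within_open[where S = "{0<..<pi/2}"]) (use assms eq in auto)
qed

section \<open>The sign of the logarithmic derivative\<close>

lemma cot_less_inverse: "0 < x \<Longrightarrow> x < pi/2 \<Longrightarrow> cot x < 1 / x"
  using x_cos_less_sin[of x] sin_gt_zero[of x] by (simp add: cot_def divide_simps mult.commute)

lemma three_inverse_minus_cot_less_tan:
  assumes "0 < x" "x < pi/2"
  shows "3 * (1 / x - cot x) < tan x"
proof -
  have cert: "trig_pos_cert 10 [0, 2] [([0, 1], Cos, 1), ([-3], Sin, 1)] 1 0 4" by code_simp
  have "0 < 2 * (2 * x) + 2 * x * cos (2 * x) - 3 * sin (2 * x)"
    using trig_expr_pos[OF cert, of "2 * x"] assms pi_less_4 by (simp add: algebra_simps)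
  also have "\<dots> = 2 * (x * sin x ^ 2 - 3 * sin x * cos x + 3 * x * cos x ^ 2)"
    unfolding sin_double cos_double using sin_cos_squared_add[of x] by algebra
  finally show ?thesis
    using assms sin_gt_zero[of x] cos_gt_zero[of x]
    by (simp add: tan_def cot_def field_simps power2_eq_square)
qed

lemma ln_deriv_quot'_shift:
  "ln_deriv_quot' p q x = ln_deriv_quot' p0 q0 x - (p - p0) * (1 / x - cot x) + (q - q0) * tan x"
  by (simp add: ln_deriv_quot'_def algebra_simps diff_divide_distrib)

lemma ln_deriv_quot'_at_7_5_1_pos:
  assumes "0 < x" "x < pi/2"
  shows "0 < ln_deriv_quot' (7/5) 1 x"
proof -
  have cert: "trig_pos_cert 12 [-24, 0, 4] [([24, 0, -1], Cos, 1), ([0, 9], Sin, 1)] 1 0 4" by code_simp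
  have "0 < 4 * (2 * x)^2 - 24 + (24 - (2 * x)^2) * cos (2 * x) + 9 * (2 * x) * sin (2 * x)"
    using trig_expr_pos[OF cert, of "2 * x"] assms pi_less_4 by (simp add: algebra_simps power2_eq_square)
  also have "\<dots> = 4 * (5 * x^2 * sin x^2 + 3 * x^2 * cos x^2 - 12 * sin x^2 + 9 * x * sin x * cos x)"
    unfolding sin_double cos_double using sin_cos_squared_add[of x] by algebra
  finally have num: "0 < 5 * x^2 * sin x^2 + 3 * x^2 * cos x^2 - 12 * sin x^2 + 9 * x * sin x * cos x"
    by simp
  have pos: "0 < sin x" "0 < sin x - x * cos x"
    using assms x_cos_less_sin[of x] by (simp_all add: sin_gt_zero)
  have "0 < (5 * x^2 * sin x^2 + 3 * x^2 * cos x^2 - 12 * sin x^2 + 9 * x * sin x * cos x)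
      / (5 * x * sin x * (sin x - x * cos x))"
    using num pos assms by (intro divide_pos_pos) simp_all
  also have "\<dots> = ln_deriv_quot' (7/5) 1 x"
    using pos assms by (simp add: ln_deriv_quot'_def cot_def field_simps power2_eq_square)
  finally show ?thesis .
qed

lemma sin_treble_sin: "sin (3 * x) = 3 * sin x - 4 * sin x ^ 3"
  for x :: real
proof -
  have "sin (3 * x) = sin (2 * x + x)" by simp
  also have "\<dots> = 3 * sin x - 4 * sin x ^ 3"
    unfolding sin_add sin_double cos_double using sin_cos_squared_add[of x] by algebra
  finally show ?thesis .
qed

lemma ln_deriv_quot'_at_46_35_34_35_neg:
  assumes "0 < x" "x < pi/2"
  shows "ln_deriv_quot' (46/35) (34/35) x < 0"
proof -
  have cert: "trig_pos_cert 16 [] [([0, -54], Sin, 1), ([0, -58], Sin, 3), ([81, 0, -108], Cos, 1),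
      ([-81, 0, 12], Cos, 3)] 1 0 2" by code_simp
  have "0 < - 54 * x * sin x - 58 * x * sin (3 * x) + (81 - 108 * x^2) * cos x + (12 * x^2 - 81) * cos (3 * x)"
    using trig_expr_pos[OF cert, of x] assms pi_less_4 by (simp add: algebra_simps power2_eq_square)
  also have "\<dots> = 4 * ((sin x - x * cos x) * (x * sin x ^ 2 + 81 * sin x * cos x + 24 * x * cos x ^ 2)
      - 35 * x^2 * sin x^2 * cos x)"
    unfolding sin_treble_sin cos_treble_cos using sin_cos_squared_add[of x] by algebra
  finally have num: "0 < (sin x - x * cos x) * (x * sin x ^ 2 + 81 * sin x * cos x + 24 * x * cos x ^ 2)
      - 35 * x^2 * sin x^2 * cos x"
    by (simp add: mult_ac)
  have pos: "0 < sin x" "0 < cos x" "0 < sin x - x * cos x"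
    using assms x_cos_less_sin[of x] by (simp_all add: sin_gt_zero cos_gt_zero)
  then have "ln_deriv_quot' (46/35) (34/35) x
      = - ((sin x - x * cos x) * (x * sin x ^ 2 + 81 * sin x * cos x + 24 * x * cos x ^ 2)
          - 35 * x^2 * sin x^2 * cos x) / (35 * x * sin x * cos x * (sin x - x * cos x))"
    using assms by (simp add: ln_deriv_quot'_def tan_def cot_def field_simps power2_eq_square)
  also have "\<dots> < 0"
    using num pos assms by (intro divide_neg_pos) simp_all
  finally show ?thesis .
qed

lemma pi_sq_quarter_bounds: "12337/5000 \<le> pi^2/4" "pi^2/4 \<le> 987/400"
proof -
  have pi: "3.141592653588 \<le> pi" "pi \<le> 3.1415926535899" by (rule pi_approx)+
  have "(9.8696::real) \<le> 3.141592653588^2" by (simp add: power2_eq_square)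
  also have "\<dots> \<le> pi^2" using pi by (intro power_mono) auto
  finally show "12337/5000 \<le> pi^2/4" by simp
  have "pi^2 \<le> 3.1415926535899^2" using pi by (intro power_mono) auto
  also have "\<dots> \<le> (9.87::real)" by (simp add: power2_eq_square)
  finally show "pi^2/4 \<le> 987/400" by simp
qed

(* At y = 2 x this is 8 (a (sin x - x cos x)^2 + 3 x cos x (sin x - x cos x) - x^2 sin^2 x),
   the numerator of - ln_deriv_quot' (a - 1) 1 x. *)
definition ln_deriv_quot'_numer :: "real \<Rightarrow> real \<Rightarrow> real" where
  "ln_deriv_quot'_numer a y = a * (4 - 4 * cos y - 4 * y * sin y + y^2 + y^2 * cos y)
     + 6 * y * sin y - 4 * y^2 - 2 * y^2 * cos y"

lemma ln_deriv_quot'_numer_double: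
  "ln_deriv_quot'_numer a (2 * x)
     = 8 * (a * (sin x - x * cos x)^2 + 3 * x * cos x * (sin x - x * cos x) - x^2 * sin x^2)"
  unfolding ln_deriv_quot'_numer_def sin_double cos_double using sin_cos_squared_add[of x] by algebra

lemma ln_deriv_quot'_numer_pos_small:
  assumes "0 < y" "y \<le> 45/16" "12337/5000 \<le> a"
  shows "0 < ln_deriv_quot'_numer a y"
proof -
  define E F where "E = 4 - 4 * cos y - 4 * y * sin y + y^2 + y^2 * cos y"
    and "F = 6 * y * sin y - 4 * y^2 - 2 * y^2 * cos y"
  have split: "ln_deriv_quot'_numer b y = b * E + F" for b
    by (simp add: ln_deriv_quot'_numer_def E_def F_def)
  have cert: "trig_pos_cert 14 [49348, 0, -7663] [([-49348, 0, 2337], Cos, 1), ([0, -19348], Sin, 1)] 16 0 45"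
    by code_simp
  have "0 < 12337 * E + 5000 * F"
    using trig_expr_pos[OF cert, of y] assms by (simp add: E_def F_def algebra_simps power2_eq_square)
  moreover have "0 \<le> E"
    using ln_deriv_quot'_numer_double[of 1 "y/2"] ln_deriv_quot'_numer_double[of 0 "y/2"] by (simp add: split)
  then have "12337/5000 * E \<le> a * E" using assms(3) by (rule mult_right_mono[rotated])
  ultimately show ?thesis unfolding split by linarith
qed

lemma ln_deriv_quot'_numer_pos_large:
  assumes "45/16 \<le> y" "y < pi"
  shows "0 < ln_deriv_quot'_numer (pi^2/4) y"
proof -
  define E' F' :: "real \<Rightarrow> real"
    where "E' z = 2 * z - 2 * z * cos z - z^2 * sin z"
      and "F' z = 6 * sin z + 2 * z * cos z - 8 * z + 2 * z^2 * sin z" for z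
  have deriv: "(ln_deriv_quot'_numer a has_real_derivative a * E' z + F' z) (at z)" for a z
    unfolding ln_deriv_quot'_numer_def[abs_def] E'_def F'_def
    by (rule derivative_eq_intros refl | simp add: algebra_simps power2_eq_square)+
  have cert_lo: "trig_pos_cert 12 [0, 15326] [([0, 14674], Cos, 1), ([-30000, 0, 2337], Sin, 1)] 16 45 6"
    by code_simp
  have cert_hi: "trig_pos_cert 12 [0, 1226] [([0, 1174], Cos, 1), ([-2400, 0, 187], Sin, 1)] 16 45 6"
    by code_simp
  have decreasing: "pi^2/4 * E' z + F' z < 0" if "y \<le> z" "z \<le> pi" for z
  proof -
    have z: "0 < z" "45/16 \<le> z" "z \<le> 51/16" using that assms pi_approx(2) by auto
    have lo: "0 < - (12337 * E' z + 5000 * F' z)"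
      using trig_expr_pos[OF cert_lo, of z] z
      by (simp add: E'_def F'_def algebra_simps power2_eq_square)
    have hi: "0 < - (987 * E' z + 400 * F' z)"
      using trig_expr_pos[OF cert_hi, of z] z
      by (simp add: E'_def F'_def algebra_simps power2_eq_square)
    show ?thesis
    proof (cases "0 \<le> E' z")
      case True
      then have "pi^2/4 * E' z \<le> 987/400 * E' z"
        using pi_sq_quarter_bounds(2) by (rule mult_right_mono[rotated])
      then show ?thesis using lo hi by linarith
    next
      case False
      then have "pi^2/4 * E' z \<le> 12337/5000 * E' z"
        using pi_sq_quarter_bounds(1) by (intro mult_right_mono_neg) auto
      then show ?thesis using lo hi by linarith
    qed
  qed
  have "ln_deriv_quot'_numer (pi^2/4) pi < ln_deriv_quot'_numer (pi^2/4) y"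
    using assms(2) by (rule DERIV_neg_imp_decreasing) (use deriv decreasing in blast)
  moreover have "ln_deriv_quot'_numer (pi^2/4) pi = 0" by (simp add: ln_deriv_quot'_numer_def power2_eq_square)
  ultimately show ?thesis by simp
qed

lemma ln_deriv_quot'_at_pi_sq_neg:
  assumes "0 < x" "x < pi/2"
  shows "ln_deriv_quot' (pi^2/4 - 1) 1 x < 0"
proof -
  let ?a = "pi^2/4"
  have "0 < ln_deriv_quot'_numer ?a (2 * x)"
    using assms ln_deriv_quot'_numer_pos_small[of "2 * x" ?a] ln_deriv_quot'_numer_pos_large[of "2 * x"]
      pi_sq_quarter_bounds
    by (cases "2 * x \<le> 45/16") auto
  then have num: "0 < ?a * (sin x - x * cos x)^2 + 3 * x * cos x * (sin x - x * cos x) - x^2 * sin x^2"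
    by (simp add: ln_deriv_quot'_numer_double)
  have pos: "0 < sin x" "0 < sin x - x * cos x"
    using assms x_cos_less_sin[of x] by (simp_all add: sin_gt_zero)
  then have "ln_deriv_quot' (?a - 1) 1 x
      = - (?a * (sin x - x * cos x)^2 + 3 * x * cos x * (sin x - x * cos x) - x^2 * sin x^2)
        / (x * sin x * (sin x - x * cos x))"
    using assms by (simp add: ln_deriv_quot'_def cot_def field_simps power2_eq_square)
  also have "\<dots> < 0"
    using num pos assms by (intro divide_neg_pos) simp_all
  finally show ?thesis .
qed

lemma ln_deriv_quot'_pos:
  assumes "1 \<le> q" "p \<le> 3 * q - 8/5" "0 < x" "x < pi/2"
  shows "0 < ln_deriv_quot' p q x"
proof -
  define A T where "A = 1 / x - cot x" and "T = tan x"
  have "ln_deriv_quot' p q x = ln_deriv_quot' (7/5) 1 x + (3 * q - 8/5 - p) * A + (q - 1) * (T - 3 * A)"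
    unfolding ln_deriv_quot'_shift[of p q x "7/5" 1] A_def[symmetric] T_def[symmetric]
    by (simp add: algebra_simps)
  also have "0 < \<dots>"
    using assms cot_less_inverse[of x] three_inverse_minus_cot_less_tan[of x] unfolding A_def T_def
    by (intro add_pos_nonneg ln_deriv_quot'_at_7_5_1_pos mult_nonneg_nonneg) simp_all
  finally show ?thesis .
qed

lemma ln_deriv_quot'_neg_large_p:
  assumes "q \<le> 1" "pi^2/4 - 1 \<le> p" "0 < x" "x < pi/2"
  shows "ln_deriv_quot' p q x < 0"
proof -
  define A T where "A = 1 / x - cot x" and "T = tan x"
  have "ln_deriv_quot' p q x = ln_deriv_quot' (pi^2/4 - 1) 1 x + (pi^2/4 - 1 - p) * A + (q - 1) * T"
    unfolding ln_deriv_quot'_shift[of p q x "pi^2/4 - 1" 1] A_def[symmetric] T_def[symmetric]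
    by (simp add: algebra_simps)
  also have "\<dots> < 0"
    using assms cot_less_inverse[of x] tan_gt_zero[of x] unfolding A_def T_def
    by (intro add_neg_nonpos ln_deriv_quot'_at_pi_sq_neg mult_nonpos_nonneg) simp_all
  finally show ?thesis .
qed

lemma ln_deriv_quot'_neg:
  assumes "q \<le> 34/35" "3 * q - 8/5 \<le> p" "0 < x" "x < pi/2"
  shows "ln_deriv_quot' p q x < 0"
proof -
  define A T where "A = 1 / x - cot x" and "T = tan x"
  have "ln_deriv_quot' p q x
      = ln_deriv_quot' (46/35) (34/35) x + (3 * q - 8/5 - p) * A + (q - 34/35) * (T - 3 * A)"
    unfolding ln_deriv_quot'_shift[of p q x "46/35" "34/35"] A_def[symmetric] T_def[symmetric]
    by (simp add: field_simps)
  also have "\<dots> < 0"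
    using assms cot_less_inverse[of x] three_inverse_minus_cot_less_tan[of x] unfolding A_def T_def
    by (intro add_neg_nonpos ln_deriv_quot'_at_46_35_34_35_neg mult_nonpos_nonneg) simp_all
  finally show ?thesis .
qed

section \<open>Monotonicity and limits of U p (sin x / x) / U q (cos x)\<close>

(* Both signs of sigma are used: sigma = -1 gives strict decrease. *)
lemma deriv_quot_strict_mono:
  assumes sign: "\<And>x. 0 < x \<Longrightarrow> x < pi/2 \<Longrightarrow> 0 < \<sigma> * ln_deriv_quot' p q x"
  shows "strict_mono_on {0<..<pi/2} (\<lambda>x. \<sigma> * deriv_quot p q x)"
proof (rule strict_mono_onI)
  fix r s :: real assume "r \<in> {0<..<pi/2}" "s \<in> {0<..<pi/2}" "r < s"
  then show "\<sigma> * deriv_quot p q r < \<sigma> * deriv_quot p q s"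
  proof (intro DERIV_pos_imp_increasing[of r s "\<lambda>x. \<sigma> * deriv_quot p q x"])
    fix x assume "r \<le> x" "x \<le> s"
    then have x: "0 < x" "x < pi/2" using \<open>r \<in> _\<close> \<open>s \<in> _\<close> by auto
    have "0 < deriv_quot p q x * (\<sigma> * ln_deriv_quot' p q x)"
      using deriv_quot_pos[OF x] sign[OF x] by simp
    moreover have "((\<lambda>x. \<sigma> * deriv_quot p q x) has_real_derivative
        deriv_quot p q x * (\<sigma> * ln_deriv_quot' p q x)) (at x)"
      using DERIV_cmult[OF has_real_derivative_deriv_quot[OF x], of \<sigma>] by (simp add: ac_simps)
    ultimately show "\<exists>d. ((\<lambda>x. \<sigma> * deriv_quot p q x) has_real_derivative d) (at x) \<and> 0 < d"
      by blast
  qed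
qed

definition U_quot :: "real \<Rightarrow> real \<Rightarrow> real \<Rightarrow> real" where
  "U_quot p q x = U p (sin x / x) / U q (cos x)"

lemma U_cos_pos: "0 < x \<Longrightarrow> x < pi/2 \<Longrightarrow> 0 < U q (cos x)"
  using cos_monotone_0_pi[of 0 x] by (intro U_pos) (simp_all add: cos_gt_zero)

lemma U_quot_tendsto_0: "(U_quot p q \<longlongrightarrow> 1/3) (at_right 0)"
proof -
  have sinc: "((\<lambda>x::real. sin x / x) \<longlongrightarrow> 1) (at_right 0)" by real_asymp
  have cos: "((\<lambda>x::real. cos x) \<longlongrightarrow> 1) (at_right 0)" by real_asymp
  have near: "\<forall>\<^sub>F x in at_right 0. 0 < x \<and> x < pi/2"
    using eventually_at_right_real[of 0 "pi/2"] by simp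
  have "((\<lambda>x. U p (sin x / x) / U q (cos x)) \<longlongrightarrow> 1/3) (at_right 0)"
  proof (rule lhopital_right_0)
    show "((\<lambda>x. U p (sin x / x)) \<longlongrightarrow> 0) (at_right 0)" using U_tendsto[OF _ sinc] by simp
    show "((\<lambda>x. U q (cos x)) \<longlongrightarrow> 0) (at_right 0)" using U_tendsto[OF _ cos] by simp
    show "\<forall>\<^sub>F x in at_right 0. U q (cos x) \<noteq> 0"
      using near by eventually_elim (simp add: U_cos_pos less_imp_neq[symmetric])
    show "\<forall>\<^sub>F x in at_right 0. cos x powr (q - 1) * sin x \<noteq> 0"
      using near by eventually_elim (auto dest: sin_cos_pos)
    show "\<forall>\<^sub>F x in at_right 0. ((\<lambda>x. U p (sin x / x)) has_real_derivative
        deriv_quot p q x * (cos x powr (q - 1) * sin x)) (at x)"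
      using near by eventually_elim (simp add: deriv_quot_mult_deriv_U_cos has_real_derivative_U_sin_div)
    show "\<forall>\<^sub>F x in at_right 0. ((\<lambda>x. U q (cos x)) has_real_derivative cos x powr (q - 1) * sin x) (at x)"
      using near by eventually_elim (simp add: has_real_derivative_U_cos)
    have "\<forall>\<^sub>F x in at_right 0. deriv_quot p q x = deriv_quot p q x * (cos x powr (q - 1) * sin x)
        / (cos x powr (q - 1) * sin x)"
      using near by eventually_elim (auto dest: sin_cos_pos)
    then show "((\<lambda>x. deriv_quot p q x * (cos x powr (q - 1) * sin x) / (cos x powr (q - 1) * sin x))
        \<longlongrightarrow> 1/3) (at_right 0)"
      by (rule tendsto_cong[THEN iffD1, OF _ deriv_quot_tendsto_0])
  qed
  then show ?thesis by (simp add: U_quot_def[abs_def])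
qed

lemma kappa_eq_U: "0 < q \<Longrightarrow> kappa p q = U p (2 / pi) / (1 / q)"
  by (simp add: kappa_def U_def ln_div)

lemma U_quot_tendsto_pi_half:
  assumes "0 < q"
  shows "(U_quot p q \<longlongrightarrow> kappa p q) (at_left (pi/2))"
proof -
  have "((\<lambda>x. sin x / x) \<longlongrightarrow> sin (pi/2) / (pi/2)) (at_left (pi/2))"
    by (intro tendsto_intros) simp
  then have num: "((\<lambda>x. U p (sin x / x)) \<longlongrightarrow> U p (2 / pi)) (at_left (pi/2))"
    by (intro U_tendsto) simp_all
  have "((\<lambda>x. cos x) \<longlongrightarrow> cos (pi/2)) (at_left (pi/2))" by (intro tendsto_intros)
  then have "((\<lambda>x. cos x powr q) \<longlongrightarrow> 0) (at_left (pi/2))"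
    using eventually_at_left_real[of 0 "pi/2"] assms
    by (intro tendsto_zero_powrI) (auto elim!: eventually_mono intro: cos_ge_zero)
  then have "((\<lambda>x. (1 - cos x powr q) / q) \<longlongrightarrow> (1 - 0) / q) (at_left (pi/2))"
    using assms by (intro tendsto_divide tendsto_diff tendsto_const) auto
  then have den: "((\<lambda>x. U q (cos x)) \<longlongrightarrow> 1 / q) (at_left (pi/2))"
    using assms by (simp add: U_def)
  show ?thesis
    using tendsto_divide[OF num den] assms by (simp add: U_quot_def[abs_def] kappa_eq_U)
qed

lemma U_quot_strict_mono:
  assumes sign: "\<And>x. 0 < x \<Longrightarrow> x < pi/2 \<Longrightarrow> 0 < \<sigma> * ln_deriv_quot' p q x"
  shows "strict_mono_on {0<..<pi/2} (\<lambda>x. \<sigma> * U_quot p q x)"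
proof -
  have sinc: "((\<lambda>x::real. sin x / x) \<longlongrightarrow> 1) (at_right 0)" by real_asymp
  have cos: "((\<lambda>x::real. cos x) \<longlongrightarrow> 1) (at_right 0)" by real_asymp
  have "strict_mono_on {0<..<pi/2} (\<lambda>x. \<sigma> * U p (sin x / x) / U q (cos x))"
  proof (rule lhospital_strict_mono_on)
    show "((\<lambda>x. \<sigma> * U p (sin x / x)) \<longlongrightarrow> 0) (at_right 0)"
      using tendsto_mult_left[OF U_tendsto[OF _ sinc], of \<sigma> p] by simp
    show "((\<lambda>x. U q (cos x)) \<longlongrightarrow> 0) (at_right 0)" using U_tendsto[OF _ cos] by simp
    fix x :: real assume x: "0 < x" "x < pi/2"
    show "((\<lambda>x. \<sigma> * U p (sin x / x)) has_real_derivative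
        \<sigma> * deriv_quot p q x * (cos x powr (q - 1) * sin x)) (at x)"
      using DERIV_cmult[OF has_real_derivative_U_sin_div[where p = p], of x \<sigma>] x
      by (simp add: deriv_quot_mult_deriv_U_cos mult.assoc)
    show "((\<lambda>x. U q (cos x)) has_real_derivative cos x powr (q - 1) * sin x) (at x)"
      using x by (rule has_real_derivative_U_cos)
    show "0 < cos x powr (q - 1) * sin x"
      using sin_cos_pos[OF x] by simp
  qed (rule deriv_quot_strict_mono[OF sign])
  then show ?thesis by (simp add: U_quot_def)
qed

lemma U_sin_div_bounds:
  assumes sign: "\<And>x. 0 < x \<Longrightarrow> x < pi/2 \<Longrightarrow> 0 < \<sigma> * ln_deriv_quot' p q x"
  shows "\<forall>x\<in>{0<..<pi/2}. \<sigma> * U q (cos x) / 3 < \<sigma> * U p (sin x / x)"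
    and "0 < q \<Longrightarrow> \<forall>x\<in>{0<..<pi/2}. \<sigma> * U p (sin x / x) < \<sigma> * kappa p q * U q (cos x)"
proof -
  note mono = U_quot_strict_mono[OF sign]
  show "\<forall>x\<in>{0<..<pi/2}. \<sigma> * U q (cos x) / 3 < \<sigma> * U p (sin x / x)"
  proof
    fix x :: real assume "x \<in> {0<..<pi/2}"
    then have x: "0 < x" "x < pi/2" by auto
    have "\<sigma> * (1/3) < \<sigma> * U_quot p q x"
      by (rule strict_mono_on_gt_at_right[OF mono x tendsto_mult_left[OF U_quot_tendsto_0]])
    then show "\<sigma> * U q (cos x) / 3 < \<sigma> * U p (sin x / x)"
      using U_cos_pos[OF x] by (simp add: U_quot_def field_simps)
  qed
  assume "0 < q"
  show "\<forall>x\<in>{0<..<pi/2}. \<sigma> * U p (sin x / x) < \<sigma> * kappa p q * U q (cos x)"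
  proof
    fix x :: real assume "x \<in> {0<..<pi/2}"
    then have x: "0 < x" "x < pi/2" by auto
    have "\<sigma> * U_quot p q x < \<sigma> * kappa p q"
      using \<open>0 < q\<close> by (intro strict_mono_on_lt_at_left[OF mono x tendsto_mult_left] U_quot_tendsto_pi_half)
    then show "\<sigma> * U p (sin x / x) < \<sigma> * kappa p q * U q (cos x)"
      using U_cos_pos[OF x] by (simp add: U_quot_def field_simps)
  qed
qed

lemma less_U_quot_iff:
  "0 < x \<Longrightarrow> x < pi/2 \<Longrightarrow> c < U_quot p q x \<longleftrightarrow> c * U q (cos x) < U p (sin x / x)"
  by (simp add: U_quot_def U_cos_pos pos_less_divide_eq)

lemma U_quot_less_iff:
  "0 < x \<Longrightarrow> x < pi/2 \<Longrightarrow> U_quot p q x < c \<longleftrightarrow> U p (sin x / x) < c * U q (cos x)"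
  by (simp add: U_quot_def U_cos_pos pos_divide_less_eq)

lemma not_U_lower_bound_above_third:
  assumes "1/3 < c"
  shows "\<not> (\<forall>x\<in>{0<..<pi/2}. c * U q (cos x) \<le> U p (sin x / x))"
proof
  assume bound: "\<forall>x\<in>{0<..<pi/2}. c * U q (cos x) \<le> U p (sin x / x)"
  obtain x where x: "x \<in> {0<..<pi/2}" "U_quot p q x < c"
    using eventually_at_right_real_witness[OF order_tendstoD(2)[OF U_quot_tendsto_0[of p q] assms], of "pi/2"]
    by auto
  then have "U p (sin x / x) < c * U q (cos x)" using U_quot_less_iff[of x p q c] by simp
  moreover have "c * U q (cos x) \<le> U p (sin x / x)" using bound x(1) by blast
  ultimately show False by simp
qed

lemma not_U_upper_bound_below_third:
  assumes "c < 1/3"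
  shows "\<not> (\<forall>x\<in>{0<..<pi/2}. U p (sin x / x) \<le> c * U q (cos x))"
proof
  assume bound: "\<forall>x\<in>{0<..<pi/2}. U p (sin x / x) \<le> c * U q (cos x)"
  obtain x where x: "x \<in> {0<..<pi/2}" "c < U_quot p q x"
    using eventually_at_right_real_witness[OF order_tendstoD(1)[OF U_quot_tendsto_0[of p q] assms], of "pi/2"]
    by auto
  then have "c * U q (cos x) < U p (sin x / x)" using less_U_quot_iff[of x c p q] by simp
  moreover have "U p (sin x / x) \<le> c * U q (cos x)" using bound x(1) by blast
  ultimately show False by simp
qed

lemma not_U_upper_bound_below_kappa:
  assumes "0 < q" "c < kappa p q"
  shows "\<not> (\<forall>x\<in>{0<..<pi/2}. U p (sin x / x) \<le> c * U q (cos x))"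
proof
  assume bound: "\<forall>x\<in>{0<..<pi/2}. U p (sin x / x) \<le> c * U q (cos x)"
  obtain x where x: "x \<in> {0<..<pi/2}" "c < U_quot p q x"
    using eventually_at_left_real_witness[OF order_tendstoD(1)[OF U_quot_tendsto_pi_half[OF assms(1)] assms(2)],
        of 0]
    by auto
  then have "c * U q (cos x) < U p (sin x / x)" using less_U_quot_iff[of x c p q] by simp
  moreover have "U p (sin x / x) \<le> c * U q (cos x)" using bound x(1) by blast
  ultimately show False by simp
qed

theorem theorem1:
  fixes p q :: real
  shows
  "(1 \<le> q \<and> p \<le> 3 * q - 8 / 5 \<longrightarrow>
      (\<forall>x\<in>{0<..<pi/2}. U q (cos x) / 3 < U p (sin x / x) \<and>
                          U p (sin x / x) < kappa p q * U q (cos x)) \<and>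
      (\<forall>c > 1/3. \<not> (\<forall>x\<in>{0<..<pi/2}. c * U q (cos x) \<le> U p (sin x / x))) \<and>
      (\<forall>c < kappa p q. \<not> (\<forall>x\<in>{0<..<pi/2}. U p (sin x / x) \<le> c * U q (cos x))))
   \<and> (34 / 35 < q \<and> q \<le> 1 \<and> pi ^ 2 / 4 - 1 \<le> p \<longrightarrow>
      (\<forall>x\<in>{0<..<pi/2}. kappa p q * U q (cos x) < U p (sin x / x) \<and>
                          U p (sin x / x) < U q (cos x) / 3))
   \<and> (0 < q \<and> q \<le> 34 / 35 \<and> 3 * q - 8 / 5 \<le> p \<longrightarrow>
      (\<forall>x\<in>{0<..<pi/2}. kappa p q * U q (cos x) < U p (sin x / x) \<and>
                          U p (sin x / x) < U q (cos x) / 3))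
   \<and> (q \<le> 0 \<and> 3 * q - 8 / 5 \<le> p \<longrightarrow>
      (\<forall>x\<in>{0<..<pi/2}. U p (sin x / x) < U q (cos x) / 3) \<and>
      (\<forall>c < 1/3. \<not> (\<forall>x\<in>{0<..<pi/2}. U p (sin x / x) \<le> c * U q (cos x))))"
proof (intro conjI impI)
  assume H: "1 \<le> q \<and> p \<le> 3 * q - 8 / 5"
  then have "\<And>x. 0 < x \<Longrightarrow> x < pi/2 \<Longrightarrow> 0 < 1 * ln_deriv_quot' p q x"
    using ln_deriv_quot'_pos by simp
  from U_sin_div_bounds[OF this] H
  show "\<forall>x\<in>{0<..<pi/2}. U q (cos x) / 3 < U p (sin x / x) \<and> U p (sin x / x) < kappa p q * U q (cos x)"
    by simp
  show "\<forall>c > 1/3. \<not> (\<forall>x\<in>{0<..<pi/2}. c * U q (cos x) \<le> U p (sin x / x))"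
    using not_U_lower_bound_above_third by blast
  show "\<forall>c < kappa p q. \<not> (\<forall>x\<in>{0<..<pi/2}. U p (sin x / x) \<le> c * U q (cos x))"
    using not_U_upper_bound_below_kappa H by simp
next
  assume H: "34 / 35 < q \<and> q \<le> 1 \<and> pi ^ 2 / 4 - 1 \<le> p"
  then have "\<And>x. 0 < x \<Longrightarrow> x < pi/2 \<Longrightarrow> 0 < -1 * ln_deriv_quot' p q x"
    using ln_deriv_quot'_neg_large_p by simp
  from U_sin_div_bounds[OF this] H
  show "\<forall>x\<in>{0<..<pi/2}. kappa p q * U q (cos x) < U p (sin x / x) \<and> U p (sin x / x) < U q (cos x) / 3"
    by simp
next
  assume H: "0 < q \<and> q \<le> 34 / 35 \<and> 3 * q - 8 / 5 \<le> p"
  then have "\<And>x. 0 < x \<Longrightarrow> x < pi/2 \<Longrightarrow> 0 < -1 * ln_deriv_quot' p q x"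
    using ln_deriv_quot'_neg by simp
  from U_sin_div_bounds[OF this] H
  show "\<forall>x\<in>{0<..<pi/2}. kappa p q * U q (cos x) < U p (sin x / x) \<and> U p (sin x / x) < U q (cos x) / 3"
    by simp
next
  assume H: "q \<le> 0 \<and> 3 * q - 8 / 5 \<le> p"
  then have "\<And>x. 0 < x \<Longrightarrow> x < pi/2 \<Longrightarrow> 0 < -1 * ln_deriv_quot' p q x"
    using ln_deriv_quot'_neg by simp
  from U_sin_div_bounds(1)[OF this] show "\<forall>x\<in>{0<..<pi/2}. U p (sin x / x) < U q (cos x) / 3"
    by simp
  show "\<forall>c < 1/3. \<not> (\<forall>x\<in>{0<..<pi/2}. U p (sin x / x) \<le> c * U q (cos x))"
    using not_U_upper_bound_below_third by blast
qed

end
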